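(* Let $G$ be a group and $\rho:G\to \mathrm{Homeo}_+(\mathbb{R})$ an action of $G$ on the real line by order-preserving homeomorphisms. Suppose $\rho$ is semi conjugated to an affine action, i.e. there exist a representation $A:G\to \mathrm{Aff}(\mathbb{R})$ and a non-decreasing map $c:\mathbb{R}\to\mathbb{R}$ whose image $c(\mathbb{R})$ is unbounded in both directions, such that $c\circ\rho(g)=A(g)\circ c$ for all $g\in G$. Then there is a nonzero measure $\mu$ on $\mathbb{R}$ which is quasi-preserved by the action $\rho$ of $G$.
   Context: $\mathrm{Aff}(\mathbb{R})$ denotes the group of affine maps $x\mapsto ax+b$ of $\mathbb{R}$ with $a\neq 0$. The map $c$ is not required to be continuous. For $g\in G$ and a measure $\mu$, $g_*\mu$ is the measure $B\mapsto \mu(\rho(g)^{-1}(B))$. A measure $\mu$ is quasi-preserved by $G$ if for every $g\in G$ there is $\lambda_g\in\mathbb{R}$ with $g_*\mu=\lambda_g\mu$. *)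

theory Defs
  imports "HOL-Analysis.Analysis"
begin

text \<open>Groups are modelled by the type class group_add (written additively, not
necessarily commutative); a group G is the universe of a type 'g.\<close>

definition homeo_plus :: "(real \<Rightarrow> real) \<Rightarrow> bool" where
  "homeo_plus f \<longleftrightarrow> (\<exists>h. homeomorphism UNIV UNIV f h) \<and> strict_mono f"

definition affine_map :: "(real \<Rightarrow> real) \<Rightarrow> bool" where
  "affine_map f \<longleftrightarrow> (\<exists>a b. a \<noteq> 0 \<and> f = (\<lambda>x. a * x + b))"

definition homeo_plus_action :: "('g::group_add \<Rightarrow> real \<Rightarrow> real) \<Rightarrow> bool" where
  "homeo_plus_action \<rho> \<longleftrightarrow> (\<forall>g. homeo_plus (\<rho> g)) \<and> (\<forall>g h. \<rho> (g + h) = \<rho> g \<circ> \<rho> h)"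

definition affine_rep :: "('g::group_add \<Rightarrow> real \<Rightarrow> real) \<Rightarrow> bool" where
  "affine_rep A \<longleftrightarrow> (\<forall>g. affine_map (A g)) \<and> (\<forall>g h. A (g + h) = A g \<circ> A h)"

definition locally_finite_borel_measure :: "real measure \<Rightarrow> bool" where
  "locally_finite_borel_measure \<mu> \<longleftrightarrow> sets \<mu> = sets borel \<and>
     (\<forall>K. compact K \<longrightarrow> emeasure \<mu> K < \<infinity>)"

text \<open>\<mu> is quasi-preserved: for every g there is a real \<lambda> with g_* \<mu> = \<lambda> \<mu>,
where (g_* \<mu>)(B) = \<mu>(\<rho>(g)^{-1}(B)).\<close>
definition quasi_preserved :: "('g \<Rightarrow> real \<Rightarrow> real) \<Rightarrow> real measure \<Rightarrow> bool" where
  "quasi_preserved \<rho> \<mu> \<longleftrightarrow> (\<forall>g. \<exists>l::real. 0 \<le> l \<and>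
     (\<forall>B \<in> sets borel. emeasure \<mu> (\<rho> g -` B) = ennreal l * emeasure \<mu> B))"

end

theory Submission
  imports Defs
begin

text \<open>Let \<open>q\<close> be the generalised inverse of \<open>c\<close>, \<open>q y = inf {x. y \<le> c x}\<close>. It is
non-decreasing, and since each \<open>\<rho> g\<close> is an increasing homeomorphism and each \<open>A g\<close> has
positive slope (because \<open>c\<close> is non-constant), the semi-conjugacy inverts to
\<open>q \<circ> A g = \<rho> g \<circ> q\<close>. The push-forward of Lebesgue measure under \<open>q\<close> is then
scaled by the factor \<open>1/a\<^sub>g\<close> under \<open>\<rho> g\<close>, where \<open>a\<^sub>g\<close> is the slope of \<open>A g\<close>. It is
locally finite because \<open>q\<close>-preimages of bounded sets are bounded, and it has infinite
total mass.\<close>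

lemma emeasure_lborel_affine_vimage:
  fixes a b :: real
  assumes "a \<noteq> 0" and "C \<in> sets borel"
  shows "emeasure lborel ((\<lambda>x. a * x + b) -` C) = ennreal (1 / \<bar>a\<bar>) * emeasure lborel C"
proof -
  have meas: "(\<lambda>x. b + a * x) \<in> borel_measurable lborel" by simp
  have "emeasure lborel C
      = emeasure (density (distr lborel borel (\<lambda>x. b + a * x)) (\<lambda>_. ennreal \<bar>a\<bar>)) C"
    using lborel_real_affine[OF assms(1), of b] by simp
  also have "\<dots> = ennreal \<bar>a\<bar> * emeasure lborel ((\<lambda>x. a * x + b) -` C)"
    using assms(2) by (simp add: emeasure_density nn_integral_cmult_indicator
        emeasure_distr[OF meas] add.commute)
  finally have "ennreal (1 / \<bar>a\<bar>) * emeasure lborel C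
      = (ennreal (1 / \<bar>a\<bar>) * ennreal \<bar>a\<bar>) * emeasure lborel ((\<lambda>x. a * x + b) -` C)"
    by (simp add: mult.assoc)
  also have "ennreal (1 / \<bar>a\<bar>) * ennreal \<bar>a\<bar> = 1"
    using assms(1) by (simp flip: ennreal_mult)
  finally show ?thesis by simp
qed

lemma quasi_preserved_distr_lborel:
  fixes \<rho> :: "'g \<Rightarrow> real \<Rightarrow> real" and q :: "real \<Rightarrow> real"
  assumes q: "q \<in> borel_measurable borel"
    and \<rho>: "\<And>g. \<rho> g \<in> borel_measurable borel"
    and conj: "\<And>g. \<exists>a b. a \<noteq> 0 \<and> q \<circ> (\<lambda>x. a * x + b) = \<rho> g \<circ> q"
  shows "quasi_preserved \<rho> (distr lborel borel q)"
  unfolding quasi_preserved_def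
proof
  fix g
  obtain a b where ab: "a \<noteq> 0" "q \<circ> (\<lambda>x. a * x + b) = \<rho> g \<circ> q"
    using conj by blast
  have "emeasure (distr lborel borel q) (\<rho> g -` B)
      = ennreal (1 / \<bar>a\<bar>) * emeasure (distr lborel borel q) B"
    if B: "B \<in> sets borel" for B
  proof -
    have "q -` (\<rho> g -` B) = (\<lambda>x. a * x + b) -` (q -` B)"
      using ab(2) by (metis vimage_comp)
    moreover have "\<rho> g -` B \<in> sets borel" using measurable_sets[OF \<rho> B] by simp
    moreover have "q -` B \<in> sets borel" using measurable_sets[OF q B] by simp
    ultimately show ?thesis
      using B q by (simp add: emeasure_distr emeasure_lborel_affine_vimage[OF ab(1)])
  qed
  then show "\<exists>l::real. 0 \<le> l \<and> (\<forall>B \<in> sets borel.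
      emeasure (distr lborel borel q) (\<rho> g -` B) = ennreal l * emeasure (distr lborel borel q) B)"
    by (intro exI[of _ "1 / \<bar>a\<bar>"]) auto
qed

lemma locally_finite_distr_lborel:
  fixes q :: "real \<Rightarrow> real"
  assumes q: "q \<in> borel_measurable borel"
    and bounded_vimage: "\<And>K. bounded K \<Longrightarrow> bounded (q -` K)"
  shows "locally_finite_borel_measure (distr lborel borel q)"
  unfolding locally_finite_borel_measure_def
proof (intro conjI allI impI)
  fix K :: "real set"
  assume "compact K"
  then have K: "K \<in> sets borel"
    by (simp add: borel_compact)
  obtain a where "q -` K \<subseteq> {-a..a}"
    using bounded_subset_cbox_symmetric[OF bounded_vimage[OF compact_imp_bounded]] \<open>compact K\<close>
    by (metis cbox_interval)
  then have "emeasure lborel (q -` K) \<le> emeasure lborel {-a..a}"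
    by (intro emeasure_mono) auto
  also have "\<dots> < \<infinity>" by (cases "-a \<le> a") auto
  finally show "emeasure (distr lborel borel q) K < \<infinity>"
    using K q by (simp add: emeasure_distr)
qed simp

definition gen_inverse :: "(real \<Rightarrow> real) \<Rightarrow> real \<Rightarrow> real" where
  "gen_inverse c y = Inf {x. y \<le> c x}"

context
  fixes c :: "real \<Rightarrow> real"
  assumes mono_c: "mono c"
    and unbounded_above: "\<not> bdd_above (range c)"
    and unbounded_below: "\<not> bdd_below (range c)"
begin

lemma upper_level_set_nonempty: "{x. y \<le> c x} \<noteq> {}"
  using unbounded_above by (auto simp: bdd_above_def not_le) (meson order.asym)

lemma upper_level_set_bdd_below: "bdd_below {x. y \<le> c x}"
proof -
  obtain x0 where x0: "c x0 < y"
    using unbounded_below by (auto simp: bdd_below_def not_le)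
  have "x0 \<le> x" if "y \<le> c x" for x
  proof (rule ccontr)
    assume "\<not> x0 \<le> x"
    then have "c x \<le> c x0" using mono_c by (simp add: monoD)
    with x0 that show False by simp
  qed
  then show ?thesis by (auto simp: bdd_below_def)
qed

lemma mono_gen_inverse: "mono (gen_inverse c)"
proof
  fix y y' :: real
  assume "y \<le> y'"
  then have "{x. y' \<le> c x} \<subseteq> {x. y \<le> c x}" by auto
  then show "gen_inverse c y \<le> gen_inverse c y'"
    unfolding gen_inverse_def
    using cInf_superset_mono[OF upper_level_set_nonempty upper_level_set_bdd_below] by blast
qed

lemma gen_inverse_semiconj:
  assumes f: "strict_mono f" "continuous_on UNIV f" "surj f"
    and \<alpha>: "strict_mono \<alpha>"
    and semiconj: "c \<circ> f = \<alpha> \<circ> c"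
  shows "gen_inverse c \<circ> \<alpha> = f \<circ> gen_inverse c"
proof
  fix y
  have "f -` {x. \<alpha> y \<le> c x} = {x. y \<le> c x}"
    using semiconj \<alpha> by (auto simp: strict_mono_less_eq fun_eq_iff)
  then have "{x. \<alpha> y \<le> c x} = f ` {x. y \<le> c x}"
    using surj_image_vimage_eq[OF f(3)] by metis
  moreover have "continuous (at_right (Inf {x. y \<le> c x})) f"
    using f(2) by (simp add: continuous_on_eq_continuous_within continuous_at_imp_continuous_at_within)
  then have "f (Inf {x. y \<le> c x}) = (INF x\<in>{x. y \<le> c x}. f x)"
    using strict_mono_mono[OF f(1)] upper_level_set_nonempty upper_level_set_bdd_below
    by (intro continuous_at_Inf_mono)
  ultimately show "(gen_inverse c \<circ> \<alpha>) y = (f \<circ> gen_inverse c) y"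
    by (simp add: gen_inverse_def image_image)
qed

lemma gen_inverse_vimage_atLeastAtMost:
  "gen_inverse c -` {l..u} \<subseteq> {c (l - 1)..c (u + 1)}"
proof
  fix y
  assume "y \<in> gen_inverse c -` {l..u}"
  then have l: "l \<le> Inf {x. y \<le> c x}" and u: "Inf {x. y \<le> c x} < u + 1"
    by (auto simp: gen_inverse_def)
  obtain x where "y \<le> c x" "x < u + 1"
    using cInf_lessD[OF upper_level_set_nonempty u] by auto
  then have "y \<le> c (u + 1)"
    using mono_c by (meson monoD less_imp_le order_trans)
  moreover have "c (l - 1) < y"
  proof (rule ccontr)
    assume "\<not> c (l - 1) < y"
    then have "Inf {x. y \<le> c x} \<le> l - 1"
      using upper_level_set_bdd_below by (intro cInf_lower) auto
    with l show False by simp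
  qed
  ultimately show "y \<in> {c (l - 1)..c (u + 1)}" by simp
qed

lemma bounded_gen_inverse_vimage:
  assumes "bounded K"
  shows "bounded (gen_inverse c -` K)"
proof -
  obtain a where "K \<subseteq> {-a..a}"
    using bounded_subset_cbox_symmetric[OF assms] by (metis cbox_interval)
  then have "gen_inverse c -` K \<subseteq> {c (-a - 1)..c (a + 1)}"
    using gen_inverse_vimage_atLeastAtMost[of "-a" a] by (meson order.trans vimage_mono)
  then show ?thesis
    using bounded_closed_interval bounded_subset by blast
qed

end

lemma affine_semiconj_slope_pos:
  fixes c f :: "real \<Rightarrow> real"
  assumes "mono c" and "c x1 < c x2" and "mono f"
    and "c \<circ> f = (\<lambda>x. a * x + b) \<circ> c" and "a \<noteq> 0"
  shows "a > 0"
proof -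
  have "x1 < x2" using assms(1,2) by (metis monoD not_le)
  then have "c (f x1) \<le> c (f x2)"
    using assms(1,3) by (simp add: monoD)
  then have "a * c x1 \<le> a * c x2"
    using assms(4) by (metis add_le_cancel_right comp_apply)
  with assms(2,5) show ?thesis
    by (smt (verit) mult_strict_left_mono_neg)
qed

theorem mainTheorem2:
  fixes \<rho> :: "'g::group_add \<Rightarrow> real \<Rightarrow> real"
    and A :: "'g \<Rightarrow> real \<Rightarrow> real"
    and c :: "real \<Rightarrow> real"
  assumes "homeo_plus_action \<rho>"
    and "affine_rep A"
    and "mono c"
    and "\<not> bdd_above (range c)" and "\<not> bdd_below (range c)"
    and "\<forall>g. c \<circ> \<rho> g = A g \<circ> c"
  shows "\<exists>\<mu>. locally_finite_borel_measure \<mu> \<and> emeasure \<mu> UNIV \<noteq> 0 \<and> quasi_preserved \<rho> \<mu>"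
proof -
  let ?q = "gen_inverse c"
  have \<rho>: "strict_mono (\<rho> g)" "continuous_on UNIV (\<rho> g)" "surj (\<rho> g)" for g
    using assms(1) unfolding homeo_plus_action_def homeo_plus_def homeomorphism_def by blast+
  obtain x where "c 0 < c x"
    using assms(4) by (auto simp: bdd_above_def not_le)
  have conj: "\<exists>a b. a \<noteq> 0 \<and> ?q \<circ> (\<lambda>x. a * x + b) = \<rho> g \<circ> ?q" for g
  proof -
    obtain a b where ab: "a \<noteq> 0" "A g = (\<lambda>x. a * x + b)"
      using assms(2) unfolding affine_rep_def affine_map_def by blast
    then have "a > 0"
      using affine_semiconj_slope_pos[OF assms(3) \<open>c 0 < c x\<close>] \<rho>(1) assms(6)
      by (metis strict_mono_mono)
    then have "strict_mono (\<lambda>x. a * x + b)" by (intro strict_monoI) simp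
    with ab show ?thesis
      using gen_inverse_semiconj[OF assms(3-5) \<rho>] assms(6) by metis
  qed
  have q: "?q \<in> borel_measurable borel"
    using mono_gen_inverse[OF assms(3-5)] by (rule borel_measurable_mono)
  have "\<rho> g \<in> borel_measurable borel" for g
    using \<rho>(2) by (rule borel_measurable_continuous_onI)
  with q conj have "quasi_preserved \<rho> (distr lborel borel ?q)"
    by (intro quasi_preserved_distr_lborel)
  moreover have "locally_finite_borel_measure (distr lborel borel ?q)"
    using q bounded_gen_inverse_vimage[OF assms(3-5)] by (rule locally_finite_distr_lborel)
  moreover have "emeasure (distr lborel borel ?q) UNIV \<noteq> 0"
    using q by (simp add: emeasure_distr)
  ultimately show ?thesis by blast
qed

end
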